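(* Let $A,B,C$ be convex ($1$-convex) sets of real numbers with $|A|=|B|=|C|=N$. Then the number of solutions of $a+b=c$ with $a\in A$, $b\in B$, $c\in C$ is $\ll N^{5/3}$.
   Context: A finite set $A=\{a_1<\dots<a_N\}\subset\mathbb{R}$ is convex ($1$-convex) if the sequence of gaps $a_{i+1}-a_i$, $1\leq i\leq N-1$, is strictly monotone. *)

theory Defs
  imports Complex_Main
begin

definition gap_seq :: "real set \<Rightarrow> nat \<Rightarrow> real" where
  "gap_seq A i = sorted_list_of_set A ! (Suc i) - sorted_list_of_set A ! i"

definition convex_set :: "real set \<Rightarrow> bool" where
  "convex_set A \<longleftrightarrow> finite A \<and>
     ((\<forall>i j. i < j \<and> j < card A - 1 \<longrightarrow> gap_seq A i < gap_seq A j) \<or>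
      (\<forall>i j. i < j \<and> j < card A - 1 \<longrightarrow> gap_seq A i > gap_seq A j))"

end

theory Submission
  imports Defs
begin

text \<open>Index the elements of A and C increasingly as a_i and c_k, and count the pairs (i, k)
with c_k - a_i \<in> B. Fix a scale D. A pair is rich if another pair with the same difference b
lies at most D steps up in both indices; then c_(k+q) - c_k = a_(i+p) - a_i with
1 \<le> p, q \<le> D, and since the shift differences of the convex set C are distinct, (i, p, q)
determines k: at most N D^2 rich pairs. Otherwise, by monotonicity, the next pair with
the same difference is more than D steps away in the first or in the second index, and
pairs that are isolated in this sense are determined by b and the block of length D + 1
containing their index: at most 2 N (N/(D + 1) + 1) of them. The choice D \<approx> N^(1/3)
gives O(N^(5/3)).\<close>

definition distinct_shift_differences :: "(nat \<Rightarrow> 'a::minus) \<Rightarrow> nat \<Rightarrow> bool" where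
  "distinct_shift_differences c m \<longleftrightarrow> (\<forall>q>0. inj_on (\<lambda>k. c (k + q) - c k) {..<m - q})"

lemma nth_sorted_list_of_set_image:
  "finite A \<Longrightarrow> (\<lambda>i. sorted_list_of_set A ! i) ` {..<card A} = A"
  by (metis atLeast0LessThan length_sorted_list_of_set nth_image order_refl
      set_sorted_list_of_set take_all)

lemma strict_mono_on_nth_sorted_list_of_set:
  "strict_mono_on {..<card A} (\<lambda>i. sorted_list_of_set A ! i)"
  by (rule strict_mono_onI)
    (simp add: sorted_wrt_nth_less[OF strict_sorted_list_of_set])

lemma nth_sorted_list_of_set_diff_eq_sum_gap_seq:
  "sorted_list_of_set A ! (k + q) - sorted_list_of_set A ! k = (\<Sum>t<q. gap_seq A (k + t))"
  by (induction q) (simp_all add: gap_seq_def)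

lemma convex_set_distinct_shift_differences:
  assumes "convex_set C"
  shows "distinct_shift_differences (\<lambda>k. sorted_list_of_set C ! k) (card C)"
proof -
  have sums_differ: "(\<Sum>t<q. gap_seq C (k + t)) \<noteq> (\<Sum>t<q. gap_seq C (k' + t))"
    if "0 < q" "k < k'" "k' + q < card C" for q k k'
  proof -
    have nonempty: "{..<q} \<noteq> {}" using \<open>0 < q\<close> by auto
    from assms consider
        (increasing) "\<forall>i j. i < j \<and> j < card C - 1 \<longrightarrow> gap_seq C i < gap_seq C j"
      | (decreasing) "\<forall>i j. i < j \<and> j < card C - 1 \<longrightarrow> gap_seq C i > gap_seq C j"
      unfolding convex_set_def by blast
    then show ?thesis
    proof cases
      case increasing
      have "(\<Sum>t<q. gap_seq C (k + t)) < (\<Sum>t<q. gap_seq C (k' + t))"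
        by (rule sum_strict_mono[OF _ nonempty]) (use increasing that in auto)
      then show ?thesis by simp
    next
      case decreasing
      have "(\<Sum>t<q. gap_seq C (k + t)) > (\<Sum>t<q. gap_seq C (k' + t))"
        by (rule sum_strict_mono[OF _ nonempty]) (use decreasing that in auto)
      then show ?thesis by simp
    qed
  qed
  show ?thesis
    unfolding distinct_shift_differences_def
  proof (intro allI impI inj_onI)
    fix q k k' assume "0 < (q::nat)" "k \<in> {..<card C - q}" "k' \<in> {..<card C - q}"
      and "sorted_list_of_set C ! (k + q) - sorted_list_of_set C ! k =
        sorted_list_of_set C ! (k' + q) - sorted_list_of_set C ! k'"
    then show "k = k'"
      using sums_differ[of q k k'] sums_differ[of q k' k]
      by (cases k k' rule: linorder_cases)
        (auto simp: nth_sorted_list_of_set_diff_eq_sum_gap_seq less_diff_conv)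
  qed
qed

lemma less_add_if_div_eq:
  fixes i j d :: nat
  assumes "0 < d" "i \<le> j" "i div d = j div d"
  shows "j < i + d"
proof -
  have "j = d * (i div d) + j mod d" using assms(3) by simp
  also have "\<dots> < d * (i div d) + d" using assms(1) by simp
  also have "\<dots> \<le> i + d" by (simp add: times_div_less_eq_dividend)
  finally show ?thesis .
qed

text \<open>Label and block of D + 1 consecutive positions determine an element.\<close>

lemma card_le_if_equal_labels_far_apart:
  fixes lbl :: "'b \<Rightarrow> 'c" and pos :: "'b \<Rightarrow> nat"
  assumes inj: "inj_on (\<lambda>x. (lbl x, pos x)) T"
    and labels: "lbl ` T \<subseteq> L" "finite L"
    and bounded: "\<forall>x\<in>T. pos x < m"
    and far_apart: "\<And>x y. x \<in> T \<Longrightarrow> y \<in> T \<Longrightarrow> lbl x = lbl y \<Longrightarrow> pos x < pos y \<Longrightarrow>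
      pos x + D < pos y"
  shows "card T \<le> card L * (m div (D + 1) + 1)"
proof -
  define block where "block x = (lbl x, pos x div (D + 1))" for x
  have "inj_on block T"
  proof (rule inj_onI)
    fix x y assume "x \<in> T" "y \<in> T" "block x = block y"
    then have same_label: "lbl x = lbl y" and same_block: "pos x div (D + 1) = pos y div (D + 1)"
      by (auto simp: block_def)
    have "pos x = pos y"
    proof (cases "pos x" "pos y" rule: linorder_cases)
      case less
      then show ?thesis
        using far_apart[OF \<open>x \<in> T\<close> \<open>y \<in> T\<close> same_label]
          less_add_if_div_eq[of "D + 1" "pos x" "pos y"] same_block by simp
    next
      case greater
      then show ?thesis
        using far_apart[OF \<open>y \<in> T\<close> \<open>x \<in> T\<close> same_label[symmetric]]
          less_add_if_div_eq[of "D + 1" "pos y" "pos x"] same_block by simp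
    qed
    with same_label show "x = y" using inj \<open>x \<in> T\<close> \<open>y \<in> T\<close> by (auto dest: inj_onD)
  qed
  moreover have "block ` T \<subseteq> L \<times> {..m div (D + 1)}"
    using labels bounded by (auto simp: block_def div_le_mono)
  ultimately have "card T \<le> card (L \<times> {..m div (D + 1)})"
    using labels by (intro card_inj_on_le) auto
  then show ?thesis by (simp add: card_cartesian_product)
qed

locale difference_count =
  fixes a c :: "nat \<Rightarrow> 'a::linordered_ab_group_add" and n m :: nat and B :: "'a set"
  assumes a_mono: "strict_mono_on {..<n} a"
    and c_mono: "strict_mono_on {..<m} c"
    and c_shifts: "distinct_shift_differences c m"
    and finite_B: "finite B"
begin

definition sols :: "(nat \<times> nat) set" where
  "sols = {(i, k). i < n \<and> k < m \<and> c k - a i \<in> B}"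

definition rich :: "nat \<Rightarrow> (nat \<times> nat) set" where
  "rich D = {(i, k) \<in> sols. \<exists>p\<in>{1..D}. \<exists>q\<in>{1..D}.
     (i + p, k + q) \<in> sols \<and> c (k + q) - a (i + p) = c k - a i}"

definition left_isolated :: "nat \<Rightarrow> (nat \<times> nat) set" where
  "left_isolated D = {(i, k) \<in> sols. \<forall>(i', k') \<in> sols.
     c k' - a i' = c k - a i \<longrightarrow> i < i' \<longrightarrow> i + D < i'}"

definition right_isolated :: "nat \<Rightarrow> (nat \<times> nat) set" where
  "right_isolated D = {(i, k) \<in> sols. \<forall>(i', k') \<in> sols.
     c k' - a i' = c k - a i \<longrightarrow> k < k' \<longrightarrow> k + D < k'}"

lemma finite_sols: "finite sols"
  by (rule finite_subset[of _ "{..<n} \<times> {..<m}"]) (auto simp: sols_def)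

lemma sols_same_difference_order:
  assumes "(i, k) \<in> sols" "(i', k') \<in> sols" "c k' - a i' = c k - a i"
  shows "i < i' \<longleftrightarrow> k < k'" and "i \<le> i' \<longleftrightarrow> k \<le> k'"
proof -
  have "a i - a i' = c k - c k'" using assms(3) by (simp add: algebra_simps)
  then have "a i < a i' \<longleftrightarrow> c k < c k'" "a i \<le> a i' \<longleftrightarrow> c k \<le> c k'"
    by (rule diff_eq_diff_less, rule diff_eq_diff_less_eq)
  then show "i < i' \<longleftrightarrow> k < k'" "i \<le> i' \<longleftrightarrow> k \<le> k'"
    using assms(1,2) strict_mono_on_less[OF a_mono] strict_mono_on_less[OF c_mono]
      strict_mono_on_less_eq[OF a_mono] strict_mono_on_less_eq[OF c_mono]
    by (auto simp: sols_def)
qed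

lemma rich_if_close_same_difference:
  assumes "(i, k) \<in> sols" "(i', k') \<in> sols" "c k' - a i' = c k - a i"
    and "i < i'" "i' \<le> i + D" "k < k'" "k' \<le> k + D"
  shows "(i, k) \<in> rich D"
proof -
  have "i' - i \<in> {1..D}" "k' - k \<in> {1..D}" using assms(4-7) by auto
  moreover have "(i + (i' - i), k + (k' - k)) \<in> sols \<and>
      c (k + (k' - k)) - a (i + (i' - i)) = c k - a i"
    using assms by simp
  ultimately show ?thesis using assms(1) unfolding rich_def by blast
qed

lemma sols_subset_rich_or_isolated:
  "sols \<subseteq> rich D \<union> left_isolated D \<union> right_isolated D"
proof (rule subrelI)
  fix i k assume ik: "(i, k) \<in> sols"
  show "(i, k) \<in> rich D \<union> left_isolated D \<union> right_isolated D"
  proof (rule ccontr)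
    assume not_covered: "(i, k) \<notin> rich D \<union> left_isolated D \<union> right_isolated D"
    then have not_rich: "(i, k) \<notin> rich D" by simp
    from not_covered ik obtain i1 k1 where
      first: "(i1, k1) \<in> sols" "c k1 - a i1 = c k - a i" "i < i1" "i1 \<le> i + D"
      by (force simp: left_isolated_def not_less)
    from not_covered ik obtain i2 k2 where
      second: "(i2, k2) \<in> sols" "c k2 - a i2 = c k - a i" "k < k2" "k2 \<le> k + D"
      by (force simp: right_isolated_def not_less)
    have "k < k1" "i < i2"
      using sols_same_difference_order ik first second by blast+
    show False
    proof (cases "i1 \<le> i2")
      case True
      then have "k1 \<le> k2"
        using sols_same_difference_order(2)[OF first(1) second(1)] first(2) second(2) by simp
      then show False
        using rich_if_close_same_difference[OF ik first] \<open>k < k1\<close> second(4) not_rich by simp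
    next
      case False
      then show False
        using rich_if_close_same_difference[OF ik second(1,2) \<open>i < i2\<close> _ second(3,4)] first(4)
          not_rich by simp
    qed
  qed
qed

lemma card_rich_le: "card (rich D) \<le> n * (D * D)"
proof -
  define I where "I = {..<n} \<times> {1..D} \<times> {1..D}"
  define F where "F = (\<lambda>(i, p, q). {(i, k) | k. k + q < m \<and> c (k + q) - c k = a (i + p) - a i})"
  have finite_I: "finite I" by (simp add: I_def)
  have finite_F: "finite (F y)" for y
    by (rule finite_subset[of _ "{fst y} \<times> {..<m}"]) (auto simp: F_def split: prod.splits)
  have card_F: "card (F y) \<le> 1" if "y \<in> I" for y
  proof -
    obtain i p q where y: "y = (i, p, q)" and "0 < q" using \<open>y \<in> I\<close> by (cases y) (auto simp: I_def)
    then have inj: "inj_on (\<lambda>k. c (k + q) - c k) {..<m - q}"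
      using c_shifts by (simp add: distinct_shift_differences_def)
    have "x = x'" if "x \<in> F y" "x' \<in> F y" for x x'
      using that by (clarsimp simp: F_def y) (rule inj_onD[OF inj]; simp add: less_diff_conv)
    then show ?thesis using finite_F by (simp add: card_le_Suc0_iff_eq)
  qed
  have "rich D \<subseteq> (\<Union>y\<in>I. F y)"
  proof
    fix x assume "x \<in> rich D"
    then obtain i k p q where "x = (i, k)" "i < n" "p \<in> {1..D}" "q \<in> {1..D}" "k + q < m"
      "c (k + q) - a (i + p) = c k - a i"
      by (auto simp: rich_def sols_def)
    then have "(i, p, q) \<in> I" "x \<in> F (i, p, q)"
      by (auto simp: I_def F_def algebra_simps)
    then show "x \<in> (\<Union>y\<in>I. F y)" by blast
  qed
  then have "card (rich D) \<le> card (\<Union>y\<in>I. F y)"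
    using finite_I finite_F by (intro card_mono) auto
  also have "\<dots> \<le> (\<Sum>y\<in>I. card (F y))" using finite_I by (rule card_UN_le)
  also have "\<dots> \<le> (\<Sum>y\<in>I. 1)" using card_F by (rule sum_mono)
  also have "\<dots> = n * (D * D)" by (simp add: I_def card_cartesian_product)
  finally show ?thesis .
qed

lemma card_left_isolated_le: "card (left_isolated D) \<le> card B * (n div (D + 1) + 1)"
proof (rule card_le_if_equal_labels_far_apart[where lbl = "\<lambda>(i, k). c k - a i" and pos = fst])
  show "inj_on (\<lambda>x. ((\<lambda>(i, k). c k - a i) x, fst x)) (left_isolated D)"
    by (rule inj_onI)
      (auto simp: left_isolated_def sols_def dest: strict_mono_on_eqD[OF c_mono])
qed (use finite_B in \<open>auto simp: left_isolated_def sols_def\<close>)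

lemma card_right_isolated_le: "card (right_isolated D) \<le> card B * (m div (D + 1) + 1)"
proof (rule card_le_if_equal_labels_far_apart[where lbl = "\<lambda>(i, k). c k - a i" and pos = snd])
  show "inj_on (\<lambda>x. ((\<lambda>(i, k). c k - a i) x, snd x)) (right_isolated D)"
    by (rule inj_onI)
      (auto simp: right_isolated_def sols_def dest: strict_mono_on_eqD[OF a_mono])
qed (use finite_B in \<open>auto simp: right_isolated_def sols_def\<close>)

lemma card_sols_le:
  "card sols \<le> n * (D * D) + card B * (n div (D + 1) + 1) + card B * (m div (D + 1) + 1)"
proof -
  have "card sols \<le> card (rich D \<union> left_isolated D \<union> right_isolated D)"
    using sols_subset_rich_or_isolated
    by (rule card_mono[rotated]) (auto simp: rich_def left_isolated_def right_isolated_def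
        intro: finite_subset[OF _ finite_sols])
  also have "\<dots> \<le> card (rich D) + card (left_isolated D) + card (right_isolated D)"
    by (meson card_Un_le add_le_mono order_trans le_refl)
  finally show ?thesis
    using card_rich_le[of D] card_left_isolated_le[of D] card_right_isolated_le[of D] by linarith
qed

lemma card_sum_triples_eq_card_sols:
  assumes "A = a ` {..<n}" "C = c ` {..<m}"
  shows "card {(x, y, z). x \<in> A \<and> y \<in> B \<and> z \<in> C \<and> x + y = z} = card sols"
proof -
  define triple where "triple = (\<lambda>(i, k). (a i, c k - a i, c k))"
  have "{(x, y, z). x \<in> A \<and> y \<in> B \<and> z \<in> C \<and> x + y = z} = triple ` sols"
  proof (intro equalityI subsetI)
    fix t assume "t \<in> {(x, y, z). x \<in> A \<and> y \<in> B \<and> z \<in> C \<and> x + y = z}"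
    then obtain i k y where t: "t = (a i, y, c k)" "i < n" "k < m" "y \<in> B" "a i + y = c k"
      using assms by auto
    then have "y = c k - a i" by (metis add_diff_cancel_left')
    with t show "t \<in> triple ` sols"
      by (auto simp: triple_def sols_def intro!: image_eqI[of _ _ "(i, k)"])
  qed (auto simp: assms triple_def sols_def)
  moreover have "inj_on triple sols"
    by (rule inj_onI) (auto simp: triple_def sols_def
        dest: strict_mono_on_eqD[OF a_mono] strict_mono_on_eqD[OF c_mono])
  ultimately show ?thesis by (simp add: card_image)
qed

end

lemma cube_root_scale_bound:
  fixes N D :: nat
  assumes D_eq: "D = nat \<lfloor>real N powr (1/3)\<rfloor>"
  shows "real (N * (D * D) + 2 * (N * (N div (D + 1) + 1))) \<le> 5 * real N powr (5/3)"
proof (cases "N = 0")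
  case False
  define r where "r = real N powr (1/3)"
  have N_pos: "real N > 0" using False by simp
  then have r_pos: "r > 0" by (simp add: r_def)
  have D_floor: "real D = of_int \<lfloor>r\<rfloor>" using r_pos by (simp add: D_eq r_def)
  have N_times_r_sq: "real N * (r * r) = real N powr (5/3)"
  proof -
    have "real N * (r * r) = real N powr (1 + 1/3 + 1/3)"
      by (simp add: r_def powr_mult_base flip: powr_add)
    then show ?thesis by simp
  qed
  have N_sq: "real N * real N = real N powr (5/3) * r"
  proof -
    have "real N powr (5/3) * r = real N powr (5/3 + 1/3)" by (simp only: r_def powr_add)
    also have "\<dots> = real N powr 2" by (rule arg_cong[where f = "(powr) (real N)"]) simp
    also have "\<dots> = real N ^ 2" by simp
    finally show ?thesis by (simp add: power2_eq_square)
  qed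
  have D_le: "real D \<le> r" and r_less: "r < real D + 1" using D_floor by linarith+
  have "real D * real D \<le> r * r" using D_le by (simp add: mult_mono)
  then have "real (N * (D * D)) \<le> real N * (r * r)" using N_pos by simp
  moreover have "real (N * (N div (D + 1))) \<le> real N powr (5/3)"
  proof -
    have "real (N div (D + 1)) \<le> real N / real (D + 1)" by (rule of_nat_div_le_of_nat)
    also have "\<dots> \<le> real N / r" using r_less r_pos by (simp add: frac_le)
    finally have "real N * real (N div (D + 1)) \<le> real N * (real N / r)"
      using N_pos by (intro mult_left_mono) auto
    also have "\<dots> = real N powr (5/3)" using N_sq r_pos by (simp add: field_simps)
    finally show ?thesis by simp
  qed
  moreover have "real N \<le> real N powr (5/3)"
    using powr_mono[of 1 "5/3" "real N"] False by simp
  ultimately show ?thesis using N_times_r_sq by simp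
qed (simp add: D_eq)

theorem mainTheorem13:
  shows "\<exists>K::real. K > 0 \<and> (\<forall>(N::nat) (A::real set) (B::real set) (C::real set).
     convex_set A \<and> convex_set B \<and> convex_set C \<and>
     card A = N \<and> card B = N \<and> card C = N \<longrightarrow>
     real (card {(a, b, c). a \<in> A \<and> b \<in> B \<and> c \<in> C \<and> a + b = c})
       \<le> K * real N powr (5/3))"
proof (intro exI[of _ 5] conjI allI impI)
  fix N A B C
  assume "convex_set A \<and> convex_set B \<and> convex_set C \<and> card A = N \<and> card B = N \<and> card C = N"
  then have convex: "convex_set A" "convex_set B" "convex_set C"
    and sizes: "card A = N" "card B = N" "card C = N" by auto
  then have finite: "finite A" "finite B" "finite C" by (auto simp: convex_set_def)
  define a where "a = (\<lambda>i. sorted_list_of_set A ! i)"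
  define c where "c = (\<lambda>k. sorted_list_of_set C ! k)"
  define D where "D = nat \<lfloor>real N powr (1/3)\<rfloor>"
  interpret difference_count a c N N B
    using strict_mono_on_nth_sorted_list_of_set[of A] strict_mono_on_nth_sorted_list_of_set[of C]
      convex_set_distinct_shift_differences[OF convex(3)] finite sizes
    by unfold_locales (simp_all add: a_def c_def)
  have "card {(x, y, z). x \<in> A \<and> y \<in> B \<and> z \<in> C \<and> x + y = z} = card sols"
    using nth_sorted_list_of_set_image[OF finite(1)] nth_sorted_list_of_set_image[OF finite(3)] sizes
    by (intro card_sum_triples_eq_card_sols) (simp_all add: a_def c_def)
  then have "real (card {(x, y, z). x \<in> A \<and> y \<in> B \<and> z \<in> C \<and> x + y = z})
      \<le> real (N * (D * D) + 2 * (N * (N div (D + 1) + 1)))"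
    using card_sols_le[of D] sizes by (simp only: of_nat_le_iff)
  also have "\<dots> \<le> 5 * real N powr (5/3)"
    using D_def by (rule cube_root_scale_bound)
  finally show "real (card {(a, b, c). a \<in> A \<and> b \<in> B \<and> c \<in> C \<and> a + b = c})
      \<le> 5 * real N powr (5/3)" .
qed simp

end
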